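(* Given $t,\Delta\in\mathbb{N}$ and a set $B\subseteq[t]$ (given as a sorted list), one can compute in time $O(|B|)$ a set $A$ such that $A$ sparsely $(t,\Delta)$-approximates $B$.
   Context: $\mathbb{N}=\{0,1,2,\dots\}$, $[t]=\{0,1,\dots,t\}$. For $A\subseteq[t]$ and $b\in\mathbb{N}$ define $\mathrm{apx}^-_t(b,A)=\max\{a\in A\cup\{t+1\}: a\le b\}$ and $\mathrm{apx}^+_t(b,A)=\min\{a\in A\cup\{t+1\}: a\ge b\}$, with $\max\emptyset=-\infty$, $\min\emptyset=\infty$. $A$ $(t,\Delta)$-approximates $B$ if $A\subseteq B\subseteq[t]$ and for every $b\in B$, $\mathrm{apx}^+_t(b,A)-\mathrm{apx}^-_t(b,A)\le\Delta$. A set $A\subseteq\mathbb{N}$ is $\Delta$-sparse if $|A\cap[x,x+\Delta]|\le 2$ for every $x\in\mathbb{N}$; $A$ sparsely $(t,\Delta)$-approximates $B$ if $A$ is $\Delta$-sparse and $(t,\Delta)$-approximates $B$. *)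

theory Defs
  imports Main "HOL-Library.Extended_Real"
begin

(* apx^-_t(b,A) and apx^+_t(b,A); max of empty set = -\<infinity>, min of empty set = \<infinity> *)
definition apx_minus :: "nat \<Rightarrow> nat \<Rightarrow> nat set \<Rightarrow> ereal" where
  "apx_minus t b A = Sup ((\<lambda>a. ereal (real a)) ` {a \<in> A \<union> {t+1}. a \<le> b})"

definition apx_plus :: "nat \<Rightarrow> nat \<Rightarrow> nat set \<Rightarrow> ereal" where
  "apx_plus t b A = Inf ((\<lambda>a. ereal (real a)) ` {a \<in> A \<union> {t+1}. a \<ge> b})"

definition approximates :: "nat \<Rightarrow> nat \<Rightarrow> nat set \<Rightarrow> nat set \<Rightarrow> bool" where
  "approximates t \<Delta> A B \<longleftrightarrow> A \<subseteq> B \<and> B \<subseteq> {0..t} \<and>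
     (\<forall>b\<in>B. apx_plus t b A - apx_minus t b A \<le> ereal (real \<Delta>))"

definition sparse :: "nat \<Rightarrow> nat set \<Rightarrow> bool" where
  "sparse \<Delta> A \<longleftrightarrow> (\<forall>x. card (A \<inter> {x..x+\<Delta>}) \<le> 2)"

definition sparsely_approximates :: "nat \<Rightarrow> nat \<Rightarrow> nat set \<Rightarrow> nat set \<Rightarrow> bool" where
  "sparsely_approximates t \<Delta> A B \<longleftrightarrow> sparse \<Delta> A \<and> approximates t \<Delta> A B"

(* The algorithm: a single greedy left-to-right scan over the sorted list B.
   The option argument is the last element put into A (None: nothing yet). *)
fun sparse_apx_scan :: "nat \<Rightarrow> nat \<Rightarrow> nat option \<Rightarrow> nat list \<Rightarrow> nat list" where
  "sparse_apx_scan t d l [] = []"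
| "sparse_apx_scan t d l [b] =
     (case l of None \<Rightarrow> [b]
      | Some a \<Rightarrow> (if d < t + 1 - a then [b] else []))"
| "sparse_apx_scan t d l (b # c # bs) =
     (case l of None \<Rightarrow> b # sparse_apx_scan t d (Some b) (c # bs)
      | Some a \<Rightarrow> (if d < c - a then b # sparse_apx_scan t d (Some b) (c # bs)
                   else sparse_apx_scan t d (Some a) (c # bs)))"

(* Running time: number of (recursive) calls of the scan, each doing O(1) work
   (one comparison and one cons), as in the Time_Functions cost model. *)
fun T_sparse_apx_scan :: "nat \<Rightarrow> nat \<Rightarrow> nat option \<Rightarrow> nat list \<Rightarrow> nat" where
  "T_sparse_apx_scan t d l [] = 1"
| "T_sparse_apx_scan t d l [b] = 1"
| "T_sparse_apx_scan t d l (b # c # bs) =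
     (case l of None \<Rightarrow> T_sparse_apx_scan t d (Some b) (c # bs) + 1
      | Some a \<Rightarrow> (if d < c - a then T_sparse_apx_scan t d (Some b) (c # bs) + 1
                   else T_sparse_apx_scan t d (Some a) (c # bs) + 1))"

definition sparse_apx :: "nat \<Rightarrow> nat \<Rightarrow> nat list \<Rightarrow> nat list" where
  "sparse_apx t d xs = sparse_apx_scan t d None xs"

definition T_sparse_apx :: "nat \<Rightarrow> nat \<Rightarrow> nat list \<Rightarrow> nat" where
  "T_sparse_apx t d xs = T_sparse_apx_scan t d None xs"

end

theory Submission
  imports Defs
begin

text \<open>The scan keeps an element b of B unless the element c following it in B lies within
  distance \<Delta> of the last kept element a; in that case c \<le> a + \<Delta>. Hence of any three consecutive
  kept elements a < b < e we have a + \<Delta> < c \<le> e, so no window of length \<Delta> contains three of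
  them. A dropped b lies between a and the next kept element (or the sentinel t + 1), which is at
  most c \<le> a + \<Delta>. Each recursive call consumes one element of B.\<close>

definition spread_triples :: "nat \<Rightarrow> nat set \<Rightarrow> bool" where
  "spread_triples d A \<longleftrightarrow> (\<forall>x\<in>A. \<forall>y\<in>A. \<forall>z\<in>A. x < y \<longrightarrow> y < z \<longrightarrow> x + d < z)"

definition bracketed :: "nat \<Rightarrow> nat \<Rightarrow> nat set \<Rightarrow> nat \<Rightarrow> bool" where
  "bracketed t d A b \<longleftrightarrow> (\<exists>lo\<in>A. \<exists>hi\<in>insert (t + 1) A. lo \<le> b \<and> b \<le> hi \<and> hi \<le> lo + d)"

lemma sparse_if_spread_triples:
  assumes "spread_triples d A"
  shows "sparse d A"
  unfolding sparse_def
proof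
  fix x
  let ?S = "A \<inter> {x..x + d}"
  show "card ?S \<le> 2"
  proof (rule ccontr)
    assume many: "\<not> card ?S \<le> 2"
    have fin: "finite ?S" by simp
    then have ne: "?S \<noteq> {}" using many by auto
    have ends: "Min ?S \<in> ?S" "Max ?S \<in> ?S" using Min_in[OF fin ne] Max_in[OF fin ne] by simp_all
    have "card {Min ?S, Max ?S} \<le> 2" by (simp add: card_insert_if)
    then have "\<not> ?S \<subseteq> {Min ?S, Max ?S}" using card_mono[of "{Min ?S, Max ?S}" ?S] many by auto
    then obtain y where y: "y \<in> ?S" "y \<noteq> Min ?S" "y \<noteq> Max ?S" by blast
    then have "Min ?S < y" "y < Max ?S" using fin by (simp_all add: order.not_eq_order_implies_strict)
    then have "Min ?S + d < Max ?S" using assms ends y unfolding spread_triples_def by blast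
    then show False using ends by auto
  qed
qed

lemma spread_triples_subset_pair:
  assumes "A \<subseteq> {p, q}"
  shows "spread_triples d A"
  unfolding spread_triples_def
proof (intro ballI impI)
  fix x y z assume "x \<in> A" "y \<in> A" "z \<in> A" "x < y" "y < z"
  moreover from this assms have "x \<in> {p, q}" "y \<in> {p, q}" "z \<in> {p, q}" by auto
  ultimately show "x + d < z" by auto
qed

lemma spread_triples_insert_below:
  assumes spread: "spread_triples d (insert b R)"
    and "a < b" and above_b: "\<forall>r\<in>R. b < r" and far: "\<forall>r\<in>R. a + d < r"
  shows "spread_triples d (insert a (insert b R))"
  unfolding spread_triples_def
proof (intro ballI impI)
  fix x y z
  assume xyz: "x \<in> insert a (insert b R)" "y \<in> insert a (insert b R)" "z \<in> insert a (insert b R)"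
    and "x < y" "y < z"
  show "x + d < z"
  proof (cases "x = a")
    case True
    then have "z \<in> R" using xyz \<open>x < y\<close> \<open>y < z\<close> above_b \<open>a < b\<close> by auto
    then show ?thesis using True far by blast
  next
    case False
    then have "x \<in> insert b R" using xyz(1) by simp
    moreover have "b \<le> x" using calculation above_b by fastforce
    ultimately show ?thesis
      using spread xyz \<open>x < y\<close> \<open>y < z\<close> \<open>a < b\<close> unfolding spread_triples_def by auto
  qed
qed

lemma bracketed_mono: "bracketed t d A b \<Longrightarrow> A \<subseteq> A' \<Longrightarrow> bracketed t d A' b"
  unfolding bracketed_def by blast

lemma apx_gap_le_if_bracketed:
  assumes "bracketed t d A b"
  shows "apx_plus t b A - apx_minus t b A \<le> ereal (real d)"
proof -
  obtain lo hi where lo: "lo \<in> A" "lo \<le> b" and hi: "hi \<in> insert (t + 1) A" "b \<le> hi"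
    and close: "hi \<le> lo + d"
    using assms unfolding bracketed_def by blast
  have "ereal (real lo) \<le> apx_minus t b A"
    unfolding apx_minus_def using lo by (intro Sup_upper) auto
  moreover have "apx_plus t b A \<le> ereal (real hi)"
    unfolding apx_plus_def using hi by (intro Inf_lower) auto
  ultimately have "apx_plus t b A - apx_minus t b A \<le> ereal (real hi) - ereal (real lo)"
    by (intro ereal_minus_mono)
  also have "\<dots> \<le> ereal (real d)" using close by simp
  finally show ?thesis .
qed

lemma set_sparse_apx_scan_subset: "set (sparse_apx_scan t d l xs) \<subseteq> set xs"
  by (induction t d l xs rule: sparse_apx_scan.induct) (auto split: option.splits)

lemma T_sparse_apx_scan_le: "T_sparse_apx_scan t d l xs \<le> length xs + 1"
  by (induction t d l xs rule: T_sparse_apx_scan.induct) (auto split: option.splits)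

lemma spread_triples_sparse_apx_scan:
  assumes "sorted_wrt (<) xs" and "\<forall>a\<in>set_option l. \<forall>x\<in>set xs. a < x"
  shows "spread_triples d (set_option l \<union> set (sparse_apx_scan t d l xs))"
  using assms
proof (induction t d l xs rule: sparse_apx_scan.induct)
  case (1 t d l)
  have "set_option l \<union> set (sparse_apx_scan t d l []) \<subseteq> {the l, the l}" by (cases l) auto
  then show ?case by (rule spread_triples_subset_pair)
next
  case (2 t d l b)
  have "set_option l \<union> set (sparse_apx_scan t d l [b]) \<subseteq> {the l, b}"
    by (cases l) auto
  then show ?case by (rule spread_triples_subset_pair)
next
  case (3 t d l b c bs)
  show ?case
  proof (cases l)
    case None
    then show ?thesis using "3.IH"(1) "3.prems"(1) by simp
  next
    case (Some a)
    show ?thesis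
    proof (cases "d < c - a")
      case True
      let ?R = "set (sparse_apx_scan t d (Some b) (c # bs))"
      have "spread_triples d (insert b ?R)" using "3.IH"(2)[OF Some True] "3.prems" by simp
      moreover have "\<forall>r\<in>?R. c \<le> r"
        using set_sparse_apx_scan_subset[of t d "Some b" "c # bs"] "3.prems"(1) by fastforce
      ultimately have "spread_triples d (insert a (insert b ?R))"
        using "3.prems" Some True by (intro spread_triples_insert_below) auto
      then show ?thesis using Some True by (simp add: insert_commute)
    next
      case False
      then show ?thesis using "3.IH"(3)[OF Some False] Some "3.prems" by simp
    qed
  qed
qed

text \<open>hd (xs @ [t + 1]) is the next element of B, or the sentinel t + 1 once B is exhausted.\<close>

lemma sparse_apx_scan_next_le:
  assumes "hd (xs @ [t + 1]) \<le> a + d"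
  shows "\<exists>h\<in>insert (t + 1) (set (sparse_apx_scan t d (Some a) xs)). h \<le> a + d"
  using assms
proof (induction xs rule: induct_list012)
  case (3 b c bs)
  show ?case
  proof (cases "d < c - a")
    case True
    then show ?thesis using "3.prems" by simp
  next
    case False
    then show ?thesis using "3.IH"(2) by simp
  qed
qed auto

lemma bracketed_sparse_apx_scan:
  assumes "sorted_wrt (<) xs" and "\<forall>a\<in>set_option l. \<forall>x\<in>set xs. a < x" and "set xs \<subseteq> {..t}"
    and "b \<in> set xs"
  shows "bracketed t d (set_option l \<union> set (sparse_apx_scan t d l xs)) b"
  using assms
proof (induction t d l xs arbitrary: b rule: sparse_apx_scan.induct)
  case (2 t d l b)
  then show ?case unfolding bracketed_def by (cases l) auto
next
  case (3 t d l b c bs x)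
  let ?S = "sparse_apx_scan t d l (b # c # bs)"
  let ?R = "sparse_apx_scan t d (Some b) (c # bs)"
  have tail: "sorted_wrt (<) (c # bs)" "set (c # bs) \<subseteq> {..t}" "\<forall>y\<in>set (c # bs). b < y"
    using "3.prems" by auto
  have keep_b: ?case if kept: "?S = b # ?R" and IH: "\<And>y. y \<in> set (c # bs) \<Longrightarrow>
      bracketed t d (insert b (set ?R)) y"
  proof (cases "x = b")
    case True
    then show ?thesis unfolding kept bracketed_def by auto
  next
    case False
    then have "bracketed t d (insert b (set ?R)) x" using IH "3.prems"(4) by simp
    then show ?thesis unfolding kept by (rule bracketed_mono) auto
  qed
  show ?case
  proof (cases l)
    case None
    then show ?thesis using keep_b "3.IH"(1)[OF None] tail by simp
  next
    case (Some a)
    show ?thesis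
    proof (cases "d < c - a")
      case True
      then show ?thesis using keep_b "3.IH"(2)[OF Some True] tail Some by simp
    next
      case False
      let ?D = "sparse_apx_scan t d (Some a) (c # bs)"
      have dropped: "?S = ?D" using Some False by simp
      show ?thesis
      proof (cases "x = b")
        case True
        have "hd ((c # bs) @ [t + 1]) \<le> a + d" using \<open>\<not> d < c - a\<close> by simp
        obtain h where h: "h \<in> insert (t + 1) (set ?D)" "h \<le> a + d"
          using sparse_apx_scan_next_le[OF \<open>hd ((c # bs) @ [t + 1]) \<le> a + d\<close>] by blast
        have "set ?D \<subseteq> set (c # bs)" by (rule set_sparse_apx_scan_subset)
        then have "b \<le> h" using h(1) "3.prems"(1,3) by fastforce
        moreover have "a \<le> b" using "3.prems"(2) Some by simp
        moreover have "a \<in> set_option l \<union> set ?S" using Some by simp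
        moreover have "h \<in> insert (t + 1) (set_option l \<union> set ?S)" using h(1) dropped by auto
        ultimately show ?thesis unfolding bracketed_def using True h(2) by blast
      next
        case False
        then show ?thesis
          using "3.IH"(3)[OF Some \<open>\<not> d < c - a\<close>] dropped Some "3.prems" by simp
      qed
    qed
  qed
qed simp

theorem lemma4p7:
  "\<exists>c::nat. \<forall>(t::nat) (\<Delta>::nat) (B::nat list).
     sorted_wrt (<) B \<longrightarrow> set B \<subseteq> {0..t} \<longrightarrow>
       sparsely_approximates t \<Delta> (set (sparse_apx t \<Delta> B)) (set B) \<and>
       T_sparse_apx t \<Delta> B \<le> c * (length B + 1)"
proof (intro exI[of _ 1] allI impI conjI)
  fix t \<Delta> :: nat and B :: "nat list"
  assume sorted: "sorted_wrt (<) B" and range: "set B \<subseteq> {0..t}"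
  let ?A = "set (sparse_apx t \<Delta> B)"
  have "sparse \<Delta> ?A"
    using spread_triples_sparse_apx_scan[OF sorted, of None \<Delta> t]
    unfolding sparse_apx_def by (simp add: sparse_if_spread_triples)
  moreover have "approximates t \<Delta> ?A (set B)"
    unfolding approximates_def
  proof (intro conjI ballI)
    show "?A \<subseteq> set B" unfolding sparse_apx_def by (rule set_sparse_apx_scan_subset)
    show "set B \<subseteq> {0..t}" by (rule range)
    fix b assume "b \<in> set B"
    moreover have "set B \<subseteq> {..t}" using range by auto
    ultimately have "bracketed t \<Delta> ?A b"
      using bracketed_sparse_apx_scan[OF sorted, of None t b \<Delta>] unfolding sparse_apx_def by simp
    then show "apx_plus t b ?A - apx_minus t b ?A \<le> ereal (real \<Delta>)"
      by (rule apx_gap_le_if_bracketed)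
  qed
  ultimately show "sparsely_approximates t \<Delta> ?A (set B)"
    unfolding sparsely_approximates_def by simp
  show "T_sparse_apx t \<Delta> B \<le> 1 * (length B + 1)"
    unfolding T_sparse_apx_def using T_sparse_apx_scan_le by simp
qed

end
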